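(* Let $\beta\in[\tfrac12,1)$. If $\lambda$ is an eigenvalue of $\Delta_\beta$, then $\lambda$ is not a principal eigenvalue; that is, $\Delta_\beta$ has no principal eigenvalue.
   Context: Tree: for an integer $m\ge2$, the regular $m$-branching tree $\mathbb{T}_m$ has as vertices the root $\emptyset$ and all finite sequences $(\emptyset,a_1,\dots,a_k)$, $k\in\mathbb{N}$, $a_i\in\{0,\dots,m-1\}$. The level of $x=(\emptyset,a_1,\dots,a_k)$ is $|x|=k$ ($|\emptyset|=0$). The successors of $x$ are $(x,i)$; for $x\ne\emptyset$, $\hat x$ denotes its immediate predecessor. A branch is an infinite sequence $(x_n)_{n\ge0}$ with $x_0=\emptyset$ and $x_{n+1}$ a successor of $x_n$; $\partial\mathbb{T}_m$ is the set of branches. For $y=(x_n)\in\partial\mathbb{T}_m$, $\lim_{x\to y}u(x)=L$ means $\lim_{n\to\infty}u(x_n)=L$. Operator: for $\beta\in[0,1)$ let $p_\beta=1$ if $\beta=0$ and $p_\beta=\beta/(1-\beta)$ if $\beta\in(0,1)$. $\Delta_\beta u(\emptyset)=\frac1m\sum_{i=0}^{m-1}u(\emptyset,i)-u(\emptyset)$ and, for $x\ne\emptyset$, $\Delta_\beta u(x)=\big(\beta u(\hat x)+\frac{1-\beta}{m}\sum_{i=0}^{m-1}u(x,i)-u(x)\big)p_\beta^{-|x|}$. Eigenvalues: $\lambda\in\mathbb{R}$ is an eigenvalue of $\Delta_\beta$ if there is a bounded $u:\mathbb{T}_m\to\mathbb{R}$, $u\not\equiv0$, with $-\Delta_\beta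 u=\lambda u$ on $\mathbb{T}_m$ and $\lim_{x\to y}u(x)=0$ for every $y\in\partial\mathbb{T}_m$. An eigenvalue $\lambda>0$ is principal if it has a non-negative eigenfunction. *)

theory Defs
  imports Complex_Main
begin

text \<open>Vertices of the regular m-branching tree: the vertex (root, a1, ..., ak) is
  represented by the list [a1, ..., ak] with all entries < m; the root is [].
  The level is the length, successors of x are x @ [i] (i < m), and the
  immediate predecessor of a non-root vertex is butlast x.\<close>

definition tree :: "nat \<Rightarrow> nat list set" where
  "tree m = {xs. \<forall>a\<in>set xs. a < m}"

definition is_branch :: "nat \<Rightarrow> (nat \<Rightarrow> nat list) \<Rightarrow> bool" where
  "is_branch m xs \<longleftrightarrow> xs 0 = [] \<and> (\<forall>n. \<exists>i<m. xs (Suc n) = xs n @ [i])"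

definition p_beta :: "real \<Rightarrow> real" where
  "p_beta \<beta> = (if \<beta> = 0 then 1 else \<beta> / (1 - \<beta>))"

definition Delta :: "nat \<Rightarrow> real \<Rightarrow> (nat list \<Rightarrow> real) \<Rightarrow> nat list \<Rightarrow> real" where
  "Delta m \<beta> u x =
     (if x = [] then (\<Sum>i<m. u [i]) / real m - u []
      else (\<beta> * u (butlast x) + (1 - \<beta>) / real m * (\<Sum>i<m. u (x @ [i])) - u x)
           * inverse (p_beta \<beta> ^ length x))"

definition is_eigenfunction :: "nat \<Rightarrow> real \<Rightarrow> real \<Rightarrow> (nat list \<Rightarrow> real) \<Rightarrow> bool" where
  "is_eigenfunction m \<beta> lam u \<longleftrightarrow>
     (\<exists>C. \<forall>x\<in>tree m. \<bar>u x\<bar> \<le> C) \<and>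
     (\<exists>x\<in>tree m. u x \<noteq> 0) \<and>
     (\<forall>x\<in>tree m. - Delta m \<beta> u x = lam * u x) \<and>
     (\<forall>xs. is_branch m xs \<longrightarrow> (\<lambda>n. u (xs n)) \<longlonglongrightarrow> 0)"

definition is_eigenvalue :: "nat \<Rightarrow> real \<Rightarrow> real \<Rightarrow> bool" where
  "is_eigenvalue m \<beta> lam \<longleftrightarrow> (\<exists>u. is_eigenfunction m \<beta> lam u)"

definition is_principal_eigenvalue :: "nat \<Rightarrow> real \<Rightarrow> real \<Rightarrow> bool" where
  "is_principal_eigenvalue m \<beta> lam \<longleftrightarrow>
     lam > 0 \<and> (\<exists>u. is_eigenfunction m \<beta> lam u \<and> (\<forall>x\<in>tree m. u x \<ge> 0))"

end

theory Submission
  imports Defs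
begin

text \<open>Let \<open>M k\<close> be the mean of a non-negative eigenfunction \<open>u\<close> over level \<open>k\<close>.
  Averaging \<open>-\<Delta>\<^sub>\<beta> u = \<lambda> u\<close> over a level gives
  \<open>M 1 - M 0 = -\<lambda> M 0\<close> and \<open>\<beta> (M (k+1) - M k) - \<lambda> p^(k+1) M (k+1) = (1 - \<beta>) (M (k+2) - M (k+1))\<close>.
  Since \<open>\<beta> \<ge> 1 - \<beta>\<close>, the increments of \<open>M\<close> are non-increasing, so \<open>M k \<le> (1 - k \<lambda>) M 0\<close>;
  non-negativity forces \<open>M 0 = 0\<close>, then every \<open>M k = 0\<close>, hence \<open>u = 0\<close>.\<close>

definition level :: "nat \<Rightarrow> nat \<Rightarrow> nat list set" where
  "level m k = {xs. length xs = k \<and> (\<forall>a\<in>set xs. a < m)}"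

lemma level_0 [simp]: "level m 0 = {[]}"
  by (auto simp: level_def)

lemma level_Suc: "level m (Suc k) = (\<lambda>(x, i). x @ [i]) ` (level m k \<times> {..<m})"
proof
  show "level m (Suc k) \<subseteq> (\<lambda>(x, i). x @ [i]) ` (level m k \<times> {..<m})"
  proof
    fix y assume y: "y \<in> level m (Suc k)"
    then have "y \<noteq> []" by (auto simp: level_def)
    then obtain x i where "y = x @ [i]" by (metis rev_exhaust)
    with y show "y \<in> (\<lambda>(x, i). x @ [i]) ` (level m k \<times> {..<m})"
      by (auto simp: level_def image_iff)
  qed
qed (auto simp: level_def)

lemma finite_level: "finite (level m k)"
  by (induction k) (auto simp: level_Suc)

lemma sum_level_Suc: "sum f (level m (Suc k)) = (\<Sum>x\<in>level m k. \<Sum>i<m. f (x @ [i]))"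
proof -
  have "inj_on (\<lambda>(x, i). x @ [i]) (level m k \<times> {..<m})"
    by (auto simp: inj_on_def)
  then have "sum f (level m (Suc k)) = sum (f \<circ> (\<lambda>(x, i). x @ [i])) (level m k \<times> {..<m})"
    by (simp add: level_Suc sum.reindex)
  then show ?thesis
    by (simp add: sum.cartesian_product split_def comp_def)
qed

lemma level_subset_tree: "level m k \<subseteq> tree m"
  by (auto simp: level_def tree_def)

lemma mem_level_length: "x \<in> tree m \<Longrightarrow> x \<in> level m (length x)"
  by (auto simp: level_def tree_def)

definition level_mean :: "nat \<Rightarrow> (nat list \<Rightarrow> real) \<Rightarrow> nat \<Rightarrow> real" where
  "level_mean m u k = (\<Sum>x\<in>level m k. u x) / real m ^ k"

lemma level_mean_nonneg:
  assumes "\<forall>x\<in>tree m. u x \<ge> 0"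
  shows "level_mean m u k \<ge> 0"
  using assms level_subset_tree unfolding level_mean_def by (auto intro!: sum_nonneg divide_nonneg_nonneg)

lemma level_mean_eq_0_imp_zero:
  assumes "m > 0" and "\<forall>x\<in>tree m. u x \<ge> 0" and "level_mean m u k = 0" and "x \<in> level m k"
  shows "u x = 0"
proof -
  have "(\<Sum>x\<in>level m k. u x) = 0"
    using assms(1,3) by (simp add: level_mean_def)
  with assms(2,4) level_subset_tree show ?thesis
    by (subst (asm) sum_nonneg_eq_0_iff[OF finite_level]) blast+
qed

lemma p_beta_nonzero: "\<beta> \<noteq> 1 \<Longrightarrow> p_beta \<beta> \<noteq> 0"
  by (simp add: p_beta_def)

lemma p_beta_nonneg: "0 \<le> \<beta> \<Longrightarrow> \<beta> < 1 \<Longrightarrow> p_beta \<beta> \<ge> 0"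
  by (simp add: p_beta_def)

lemma eigen_equation_root:
  assumes "- Delta m \<beta> u [] = lam * u []"
  shows "level_mean m u 1 - level_mean m u 0 = - lam * level_mean m u 0"
  using assms sum_level_Suc[of u m 0] by (simp add: Delta_def level_mean_def)

lemma eigen_equation_nonroot:
  assumes "p_beta \<beta> \<noteq> 0" and "x \<noteq> []" and "- Delta m \<beta> u x = lam * u x"
  shows "\<beta> * u (butlast x) + (1 - \<beta>) / real m * (\<Sum>i<m. u (x @ [i])) - u x
         = - lam * p_beta \<beta> ^ length x * u x"
  using assms by (simp add: Delta_def field_simps)

lemma eigen_equation_level_sum:
  assumes "p_beta \<beta> \<noteq> 0" and eq: "\<forall>x\<in>tree m. - Delta m \<beta> u x = lam * u x"
  defines "S k \<equiv> \<Sum>x\<in>level m k. u x"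
  shows "\<beta> * real m * S j + (1 - \<beta>) / real m * S (Suc (Suc j)) - S (Suc j)
         = - lam * p_beta \<beta> ^ Suc j * S (Suc j)"
proof -
  define p where "p = p_beta \<beta> ^ Suc j"
  have "(\<Sum>x\<in>level m (Suc j). \<beta> * u (butlast x) + (1 - \<beta>) / real m * (\<Sum>i<m. u (x @ [i])) - u x)
        = (\<Sum>x\<in>level m (Suc j). - lam * p * u x)"
  proof (rule sum.cong)
    fix x assume x: "x \<in> level m (Suc j)"
    then have "x \<noteq> []" "length x = Suc j" by (auto simp: level_def)
    with x eq level_subset_tree assms(1) show "\<beta> * u (butlast x) + (1 - \<beta>) / real m *
        (\<Sum>i<m. u (x @ [i])) - u x = - lam * p * u x"
      unfolding p_def by (metis eigen_equation_nonroot subsetD)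
  qed simp
  moreover have "(\<Sum>x\<in>level m (Suc j). \<beta> * u (butlast x) + (1 - \<beta>) / real m * (\<Sum>i<m. u (x @ [i])) - u x)
      = \<beta> * (\<Sum>x\<in>level m (Suc j). u (butlast x))
        + (1 - \<beta>) / real m * (\<Sum>x\<in>level m (Suc j). \<Sum>i<m. u (x @ [i])) - S (Suc j)"
    by (simp add: S_def sum.distrib sum_subtractf sum_distrib_left)
  moreover have "(\<Sum>x\<in>level m (Suc j). u (butlast x)) = real m * S j"
    unfolding S_def sum_level_Suc by (simp add: sum_distrib_left)
  moreover have "(\<Sum>x\<in>level m (Suc j). \<Sum>i<m. u (x @ [i])) = S (Suc (Suc j))"
    unfolding S_def by (simp add: sum_level_Suc)
  moreover have "(\<Sum>x\<in>level m (Suc j). - lam * p * u x) = - lam * p * S (Suc j)"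
    unfolding S_def by (simp add: sum_distrib_left)
  ultimately show ?thesis
    unfolding p_def by (simp add: algebra_simps)
qed

lemma eigen_equation_level_mean:
  assumes "m > 0" and "p_beta \<beta> \<noteq> 0"
    and eq: "\<forall>x\<in>tree m. - Delta m \<beta> u x = lam * u x"
  shows "\<beta> * level_mean m u j + (1 - \<beta>) * level_mean m u (Suc (Suc j)) - level_mean m u (Suc j)
         = - lam * p_beta \<beta> ^ Suc j * level_mean m u (Suc j)"
proof -
  define p where "p = p_beta \<beta> ^ Suc j"
  have sum_eq: "(\<Sum>x\<in>level m k. u x) = real m ^ k * level_mean m u k" for k
    using assms(1) by (simp add: level_mean_def)
  have "\<beta> * real m * (real m ^ j * level_mean m u j)
      + (1 - \<beta>) / real m * (real m ^ Suc (Suc j) * level_mean m u (Suc (Suc j)))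
      - real m ^ Suc j * level_mean m u (Suc j) = - lam * p * (real m ^ Suc j * level_mean m u (Suc j))"
    using eigen_equation_level_sum[OF assms(2) eq, of j] unfolding sum_eq p_def .
  moreover have "(1 - \<beta>) / real m * (real m ^ Suc (Suc j) * level_mean m u (Suc (Suc j)))
      = real m ^ Suc j * ((1 - \<beta>) * level_mean m u (Suc (Suc j)))"
    using assms(1) by simp
  ultimately have "real m ^ Suc j * (\<beta> * level_mean m u j + (1 - \<beta>) * level_mean m u (Suc (Suc j))
      - level_mean m u (Suc j)) = real m ^ Suc j * (- lam * p * level_mean m u (Suc j))"
    by (simp add: algebra_simps)
  moreover have "real m ^ Suc j \<noteq> 0"
    using assms(1) by simp
  ultimately show ?thesis
    unfolding p_def using mult_left_cancel by blast
qed

lemma increments_le_initial: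
  fixes M c :: "nat \<Rightarrow> real"
  assumes M_nonneg: "\<And>k. M k \<ge> 0" and c_nonneg: "\<And>k. c k \<ge> 0" and "lam > 0"
    and "1/2 \<le> \<beta>" and "\<beta> < 1"
    and start: "M 1 - M 0 = - lam * M 0"
    and step: "\<And>j. \<beta> * M j + (1 - \<beta>) * M (Suc (Suc j)) - M (Suc j) = - lam * c j * M (Suc j)"
  shows "M (Suc k) - M k \<le> - lam * M 0"
proof (induction k)
  case 0
  then show ?case using start by simp
next
  case (Suc k)
  define d where "d k = M (Suc k) - M k" for k
  have "d k \<le> 0"
  proof -
    have "lam * M 0 \<ge> 0"
      using \<open>lam > 0\<close> M_nonneg[of 0] by simp
    with Suc.IH show ?thesis
      unfolding d_def by linarith
  qed
  have "(1 - \<beta>) * d (Suc k) = \<beta> * d k - lam * c k * M (Suc k)"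
    using step[of k] by (simp add: d_def algebra_simps)
  also have "\<dots> \<le> \<beta> * d k"
    using \<open>lam > 0\<close> c_nonneg[of k] M_nonneg[of "Suc k"] by simp
  also have "\<dots> \<le> (1 - \<beta>) * d k"
    using \<open>d k \<le> 0\<close> \<open>1/2 \<le> \<beta>\<close> by (simp add: mult_right_mono_neg)
  finally have "d (Suc k) \<le> d k"
    using \<open>\<beta> < 1\<close> by simp
  with Suc.IH show ?case by (simp add: d_def)
qed

lemma mean_recurrence_nonneg_imp_zero:
  fixes M c :: "nat \<Rightarrow> real"
  assumes M_nonneg: "\<And>k. M k \<ge> 0" and c_nonneg: "\<And>k. c k \<ge> 0" and "lam > 0"
    and "1/2 \<le> \<beta>" and "\<beta> < 1"
    and start: "M 1 - M 0 = - lam * M 0"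
    and step: "\<And>j. \<beta> * M j + (1 - \<beta>) * M (Suc (Suc j)) - M (Suc j) = - lam * c j * M (Suc j)"
  shows "M k = 0"
proof -
  have M_le: "M k \<le> M 0 - real k * lam * M 0" for k
  proof (induction k)
    case (Suc k)
    then show ?case
      using increments_le_initial[OF assms, of k] by (simp add: algebra_simps)
  qed simp
  have "M 0 = 0"
  proof (rule ccontr)
    assume "M 0 \<noteq> 0"
    with M_nonneg[of 0] have "M 0 > 0" by linarith
    obtain k :: nat where "real k > 1 / lam"
      using reals_Archimedean2 by blast
    with \<open>lam > 0\<close> have "real k * lam > 1" by (simp add: field_simps)
    with \<open>M 0 > 0\<close> have "real k * lam * M 0 > M 0" by simp
    with M_le[of k] M_nonneg[of k] show False by simp
  qed
  with M_le[of k] M_nonneg[of k] show ?thesis by simp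
qed

theorem theorem1p4:
  fixes m :: nat and \<beta> lam :: real
  assumes "m \<ge> 2" and "1/2 \<le> \<beta>" and "\<beta> < 1"
      and "is_eigenvalue m \<beta> lam"
  shows "\<not> is_principal_eigenvalue m \<beta> lam"
proof
  assume "is_principal_eigenvalue m \<beta> lam"
  then obtain u where "lam > 0" and ef: "is_eigenfunction m \<beta> lam u"
    and nonneg: "\<forall>x\<in>tree m. u x \<ge> 0"
    by (auto simp: is_principal_eigenvalue_def)
  from ef obtain x0 where x0: "x0 \<in> tree m" "u x0 \<noteq> 0"
    and eq: "\<forall>x\<in>tree m. - Delta m \<beta> u x = lam * u x"
    by (auto simp: is_eigenfunction_def)
  have "m > 0" using assms(1) by simp
  have "[] \<in> tree m" by (simp add: tree_def)
  have "level_mean m u k = 0" for k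
  proof (rule mean_recurrence_nonneg_imp_zero)
    show "level_mean m u 1 - level_mean m u 0 = - lam * level_mean m u 0"
      using eq \<open>[] \<in> tree m\<close> by (intro eigen_equation_root) blast
    show "\<beta> * level_mean m u j + (1 - \<beta>) * level_mean m u (Suc (Suc j)) - level_mean m u (Suc j)
          = - lam * p_beta \<beta> ^ Suc j * level_mean m u (Suc j)" for j
      using eigen_equation_level_mean[OF \<open>m > 0\<close> p_beta_nonzero eq] assms by simp
  qed (use assms \<open>lam > 0\<close> nonneg level_mean_nonneg p_beta_nonneg in auto)
  with x0 \<open>m > 0\<close> nonneg show False
    using level_mean_eq_0_imp_zero mem_level_length by blast
qed

end
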